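(* Let $X_1, \dots, X_n$ be independent, identically distributed random variables taking values in $[0, \infty)$, with common distribution function $F$. Suppose that (1) $F$ has a continuous density $f$ in a neighborhood of $0$ which is nonvanishing there (in particular $f(0) \neq 0$), and (2) $1 - F \in L^p([0, \infty))$ for some $p > 0$. Then, as $n \to \infty$, \[ \mathbb{E}\big(\min(X_1, \dots, X_n)\big) \sim \frac{1}{f(0)(n+1)}. \]
   Context: $a_n \sim b_n$ means $a_n / b_n \to 1$ as $n \to \infty$. *)

theory Defs
  imports "HOL-Probability.Probability" "HOL-Library.Landau_Symbols"
begin

end

theory Submission
  imports Defs
begin

text \<open>
  By the layer-cake formula and independence, \<open>E min(X\<^sub>1, \<dots>, X\<^sub>n) = \<integral>\<^sub>0\<^sup>\<infinity> G(t)\<^sup>n dt\<close>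
  with \<open>G = 1 - F\<close>. Near \<open>0\<close> we have \<open>G(t) = 1 - f(0) t + o(t)\<close>, so on a short interval
  \<open>[0, \<eta>]\<close> the integrand is squeezed between the powers \<open>(1 - (f(0) \<plusminus> \<epsilon>) t)\<^sup>n\<close>, whose
  integrals are about \<open>1 / ((f(0) \<plusminus> \<epsilon>)(n + 1))\<close>. Beyond \<open>\<eta>\<close> we bound
  \<open>G\<^sup>n \<le> G(\<eta>)\<^bsup>n - N\<^esup> G\<^sup>p\<close> with \<open>N = \<lceil>p\<rceil>\<close>; since \<open>G(\<eta>) < 1\<close> and \<open>G\<^sup>p\<close> is
  integrable, this tail is \<open>o(1/n)\<close>.
\<close>

lemma nn_integral_layer_cake:
  fixes Y :: "'a \<Rightarrow> real"
  assumes "sigma_finite_measure M" and [measurable]: "Y \<in> borel_measurable M"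
    and nonneg: "\<And>x. x \<in> space M \<Longrightarrow> 0 \<le> Y x"
  shows "(\<integral>\<^sup>+x. ennreal (Y x) \<partial>M) =
    (\<integral>\<^sup>+t. indicator {0..} t * emeasure M {x\<in>space M. t < Y x} \<partial>lborel)"
proof -
  interpret pair_sigma_finite M lborel
    using assms(1) by (simp add: pair_sigma_finite_def lborel.sigma_finite_measure_axioms)
  let ?under = "\<lambda>x t. indicator {0..} t * indicator {x\<in>space M. t < Y x} x :: ennreal"
  have "(\<integral>\<^sup>+x. ennreal (Y x) \<partial>M) = (\<integral>\<^sup>+x. (\<integral>\<^sup>+t. ?under x t \<partial>lborel) \<partial>M)"
  proof (rule nn_integral_cong)
    fix x assume x: "x \<in> space M"
    have "(\<integral>\<^sup>+t. ?under x t \<partial>lborel) = (\<integral>\<^sup>+t. indicator {0..<Y x} t \<partial>lborel)"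
      using x by (intro nn_integral_cong) (auto simp: indicator_def)
    then show "ennreal (Y x) = (\<integral>\<^sup>+t. ?under x t \<partial>lborel)"
      using nonneg[OF x] by simp
  qed
  also have "\<dots> = (\<integral>\<^sup>+t. (\<integral>\<^sup>+x. ?under x t \<partial>M) \<partial>lborel)"
    by (rule Fubini'[symmetric]) measurable
  also have "\<dots> = (\<integral>\<^sup>+t. indicator {0..} t * emeasure M {x\<in>space M. t < Y x} \<partial>lborel)"
    by (intro nn_integral_cong nn_integral_cmult_indicator) measurable
  finally show ?thesis .
qed

lemma (in prob_space) prob_Min_greater_iid:
  assumes indep: "indep_vars (\<lambda>_. borel) X I"
    and ident: "\<And>i. i \<in> I \<Longrightarrow> distr M borel (X i) = D"
    and I: "finite I" "I \<noteq> {}"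
  shows "prob {x\<in>space M. t < Min ((\<lambda>i. X i x) ` I)} = (1 - cdf D t) ^ card I"
proof -
  have [measurable]: "X i \<in> borel_measurable M" if "i \<in> I" for i
    using indep that by (auto simp: indep_vars_def)
  have prob_greater: "prob (X i -` {t<..} \<inter> space M) = 1 - cdf D t" if i: "i \<in> I" for i
  proof -
    interpret D: real_distribution D
      unfolding ident[OF i, symmetric] by (rule real_distribution_distr) (simp add: i)
    have "prob (X i -` {t<..} \<inter> space M) = measure D (space D - {..t})"
      by (subst ident[OF i, symmetric], subst measure_distr)
         (auto simp: i Compl_eq_Diff_UNIV[symmetric] Compl_atMost)
    also have "\<dots> = 1 - cdf D t"
      by (subst D.prob_compl) (auto simp: cdf_def)
    finally show ?thesis .
  qed
  have "{x\<in>space M. t < Min ((\<lambda>i. X i x) ` I)} = (\<Inter>i\<in>I. X i -` {t<..} \<inter> space M)"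
    using I by auto
  moreover have "prob (\<Inter>i\<in>I. X i -` {t<..} \<inter> space M) = (\<Prod>i\<in>I. prob (X i -` {t<..} \<inter> space M))"
    using I by (intro indep_varsD[OF indep]) auto
  ultimately have "prob {x\<in>space M. t < Min ((\<lambda>i. X i x) ` I)} = (\<Prod>i\<in>I. prob (X i -` {t<..} \<inter> space M))"
    by simp
  also have "\<dots> = (1 - cdf D t) ^ card I"
    by (simp add: prob_greater)
  finally show ?thesis .
qed

text \<open>A divergent integral is sent to \<open>0\<close> by \<open>enn2real\<close>; under the \<open>L\<^sup>p\<close> hypothesis
  the integral converges for \<open>n \<ge> p\<close>, see \<open>nn_integral_power_finite\<close>.\<close>

definition power_integral :: "(real \<Rightarrow> real) \<Rightarrow> nat \<Rightarrow> real" where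
  "power_integral G n = enn2real (\<integral>\<^sup>+t. indicator {0..} t * ennreal (G t ^ n) \<partial>lborel)"

lemma (in prob_space) expectation_Min_iid:
  assumes indep: "indep_vars (\<lambda>_. borel) X I"
    and ident: "\<And>i. i \<in> I \<Longrightarrow> distr M borel (X i) = D"
    and nonneg: "\<And>i x. i \<in> I \<Longrightarrow> x \<in> space M \<Longrightarrow> 0 \<le> X i x"
    and I: "finite I" "I \<noteq> {}"
  shows "expectation (\<lambda>x. Min ((\<lambda>i. X i x) ` I)) = power_integral (\<lambda>t. 1 - cdf D t) (card I)"
proof -
  have [measurable]: "X i \<in> borel_measurable M" if "i \<in> I" for i
    using indep that by (auto simp: indep_vars_def)
  define Y where "Y x = Min ((\<lambda>i. X i x) ` I)" for x
  have [measurable]: "Y \<in> borel_measurable M"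
    unfolding Y_def using I by measurable
  have Y_nonneg: "0 \<le> Y x" if "x \<in> space M" for x
    unfolding Y_def using I nonneg[OF _ that] by (subst Min_ge_iff) auto
  have "expectation Y = enn2real (\<integral>\<^sup>+x. ennreal (Y x) \<partial>M)"
    by (rule integral_eq_nn_integral) (use Y_nonneg in auto)
  also have "(\<integral>\<^sup>+x. ennreal (Y x) \<partial>M) =
      (\<integral>\<^sup>+t. indicator {0..} t * emeasure M {x\<in>space M. t < Y x} \<partial>lborel)"
    by (rule nn_integral_layer_cake[OF sigma_finite_measure_axioms _ Y_nonneg]) simp
  also have "\<dots> = (\<integral>\<^sup>+t. indicator {0..} t * ennreal ((1 - cdf D t) ^ card I) \<partial>lborel)"
    using prob_Min_greater_iid[OF indep ident I]
    by (simp add: Y_def emeasure_eq_measure)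
  finally show ?thesis
    by (simp add: Y_def power_integral_def)
qed

lemma nn_integral_one_minus_linear_power:
  fixes c \<eta> :: real
  assumes "0 < c" "0 \<le> \<eta>" "c * \<eta> \<le> 1"
  shows "(\<integral>\<^sup>+t. ennreal ((1 - c*t)^n) * indicator {0..\<eta>} t \<partial>lborel)
           = ennreal ((1 - (1 - c*\<eta>)^(n+1)) / (c * (real n + 1)))"
proof -
  have pos: "0 < c * (real n + 1)" using assms by simp
  let ?P = "\<lambda>t. - ((1 - c*t)^(Suc n)) / (c * (real n + 1))"
  have "(\<integral>\<^sup>+t. ennreal ((1 - c*t)^n) * indicator {0..\<eta>} t \<partial>lborel) = ?P \<eta> - ?P 0"
  proof (rule nn_integral_FTC_Icc)
    fix t assume t: "t \<in> {0..\<eta>}"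
    have "DERIV (\<lambda>t. (1 - c*t)^(Suc n)) t :> real (Suc n) * (1 - c*t)^n * (- c)"
      by (auto intro!: derivative_eq_intros) (cases n; simp add: algebra_simps)
    then have "DERIV ?P t :> - (real (Suc n) * (1 - c*t)^n * (- c)) / (c * (real n + 1))"
      using assms by (intro derivative_eq_intros) auto
    moreover have "- (real (Suc n) * (1 - c*t)^n * (- c)) / (c * (real n + 1)) = (1 - c*t)^n"
      using pos by (simp add: field_simps)
    ultimately show "DERIV ?P t :> (1 - c*t)^n"
      by simp
    have "c * t \<le> c * \<eta>" using t assms by (intro mult_left_mono) auto
    then show "0 \<le> (1 - c*t)^n" using assms by (intro zero_le_power) linarith
  qed (use assms in auto)
  also have "?P \<eta> - ?P 0 = (1 - (1 - c*\<eta>)^(n+1)) / (c * (real n + 1))"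
    using pos by (simp add: field_simps)
  finally show ?thesis .
qed

lemma power_le_power_mult_powr:
  fixes g q p :: real
  assumes "0 \<le> g" "g \<le> 1" "g \<le> q" "0 < p" "nat \<lceil>p\<rceil> \<le> n"
  shows "g ^ n \<le> q ^ (n - nat \<lceil>p\<rceil>) * g powr p"
proof -
  define N where "N = nat \<lceil>p\<rceil>"
  have "g ^ n = g ^ (n - N) * g ^ N" using assms by (simp add: N_def flip: power_add)
  also have "\<dots> \<le> q ^ (n - N) * g powr p"
  proof (rule mult_mono)
    show "g ^ (n - N) \<le> q ^ (n - N)" using assms by (intro power_mono) auto
    show "g ^ N \<le> g powr p"
    proof (cases "g = 0")
      case True
      then show ?thesis using assms by (simp add: N_def power_0_left)
    next
      case False
      then have "g ^ N = g powr real N" using assms by (simp add: powr_realpow)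
      also have "\<dots> \<le> g powr p" using assms False real_nat_ceiling_ge[of p]
        by (intro powr_mono') (auto simp: N_def)
      finally show ?thesis .
    qed
  qed (use assms in auto)
  finally show ?thesis by (simp add: N_def)
qed

lemma nn_integral_power_finite:
  fixes G :: "real \<Rightarrow> real"
  assumes "\<And>t. 0 \<le> G t" "\<And>t. G t \<le> 1" "0 < p"
    and Lp: "(\<lambda>t. G t powr p) integrable_on {0..}" and "nat \<lceil>p\<rceil> \<le> n"
  shows "(\<integral>\<^sup>+t. indicator {0..} t * ennreal (G t ^ n) \<partial>lborel) < top"
proof -
  have "(\<integral>\<^sup>+t. indicator {0..} t * ennreal (G t ^ n) \<partial>lborel)
      \<le> (\<integral>\<^sup>+t. ennreal (G t powr p) * indicator {0..} t \<partial>lborel)"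
    using power_le_power_mult_powr[of "G _" 1 p n] assms
    by (intro nn_integral_mono) (auto simp: indicator_def intro: ennreal_leI)
  also have "\<dots> = ennreal (integral {0..} (\<lambda>t. G t powr p))"
    using Lp by (intro nn_integral_has_integral_lebesgue') auto
  finally show ?thesis by (simp add: le_less_trans)
qed

lemma power_integral_ge:
  fixes G :: "real \<Rightarrow> real"
  assumes "0 < b" "0 \<le> \<eta>" "b * \<eta> \<le> 1" and lower: "\<And>t. t \<in> {0..\<eta>} \<Longrightarrow> 1 - b*t \<le> G t"
    and finite: "(\<integral>\<^sup>+t. indicator {0..} t * ennreal (G t ^ n) \<partial>lborel) < top"
  shows "(1 - (1 - b*\<eta>)^(n+1)) / (b * (real n + 1)) \<le> power_integral G n"
proof -
  have "ennreal ((1 - (1 - b*\<eta>)^(n+1)) / (b * (real n + 1)))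
      = (\<integral>\<^sup>+t. ennreal ((1 - b*t)^n) * indicator {0..\<eta>} t \<partial>lborel)"
    using assms by (simp add: nn_integral_one_minus_linear_power)
  also have "\<dots> \<le> (\<integral>\<^sup>+t. indicator {0..} t * ennreal (G t ^ n) \<partial>lborel)"
  proof (intro nn_integral_mono)
    fix t :: real
    have "(1 - b*t)^n \<le> G t ^ n" if "t \<in> {0..\<eta>}"
    proof (rule power_mono)
      have "b * t \<le> b * \<eta>" using that assms by (intro mult_left_mono) auto
      then show "0 \<le> 1 - b*t" using assms by linarith
    qed (use lower that in auto)
    then show "ennreal ((1 - b*t)^n) * indicator {0..\<eta>} t \<le> indicator {0..} t * ennreal (G t ^ n)"
      by (auto simp: indicator_def intro: ennreal_leI)
  qed
  finally have "ennreal ((1 - (1 - b*\<eta>)^(n+1)) / (b * (real n + 1)))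
      \<le> (\<integral>\<^sup>+t. indicator {0..} t * ennreal (G t ^ n) \<partial>lborel)" .
  from enn2real_mono[OF this finite] show ?thesis
    unfolding power_integral_def
    by (smt (verit) enn2real_ennreal enn2real_nonneg)
qed

lemma power_integral_le:
  fixes G :: "real \<Rightarrow> real"
  assumes G0: "\<And>t. 0 \<le> G t" and G1: "\<And>t. G t \<le> 1" and anti: "antimono G"
    and "0 < p" and Lp: "(\<lambda>t. G t powr p) integrable_on {0..}"
    and "0 < a" "0 \<le> \<eta>" and upper: "\<And>t. t \<in> {0..\<eta>} \<Longrightarrow> G t \<le> 1 - a*t"
    and n: "nat \<lceil>p\<rceil> \<le> n"
  shows "power_integral G n
           \<le> 1 / (a * (real n + 1)) + G \<eta> ^ (n - nat \<lceil>p\<rceil>) * integral {0..} (\<lambda>t. G t powr p)"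
proof -
  define N where "N = nat \<lceil>p\<rceil>"
  define C where "C = integral {0..} (\<lambda>t. G t powr p)"
  have C: "0 \<le> C" unfolding C_def by (rule integral_nonneg[OF Lp]) simp
  have nn_integral_C: "(\<integral>\<^sup>+t. ennreal (G t powr p) * indicator {0..} t \<partial>lborel) = ennreal C"
    unfolding C_def using Lp by (intro nn_integral_has_integral_lebesgue') auto
  have "mono (\<lambda>t. - G t)" using anti by (auto simp: mono_def antimono_def)
  then have [measurable]: "G \<in> borel_measurable borel"
    using borel_measurable_mono[of "\<lambda>t. - G t"] by (simp add: borel_measurable_uminus_eq)
  have "a * \<eta> \<le> 1" using G0[of \<eta>] upper[of \<eta>] \<open>0 \<le> \<eta>\<close> by simp
  then have \<eta>: "\<eta> \<le> 1 / a" using \<open>0 < a\<close> by (simp add: field_simps)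
  \<comment> \<open>On \<open>[0, \<eta>]\<close> use the linear bound, integrated up to its zero \<open>1/a\<close> to get \<open>1/(a(n+1))\<close>.\<close>
  have "(\<integral>\<^sup>+t. indicator {0..} t * ennreal (G t ^ n) \<partial>lborel)
      \<le> (\<integral>\<^sup>+t. ennreal ((1 - a*t)^n) * indicator {0..1/a} t
                + ennreal (G \<eta> ^ (n - N)) * (ennreal (G t powr p) * indicator {0..} t) \<partial>lborel)"
  proof (rule nn_integral_mono)
    fix t :: real
    consider "t < 0" | "t \<in> {0..\<eta>}" | "\<eta> < t" by force
    then show "indicator {0..} t * ennreal (G t ^ n)
        \<le> ennreal ((1 - a*t)^n) * indicator {0..1/a} t
          + ennreal (G \<eta> ^ (n - N)) * (ennreal (G t powr p) * indicator {0..} t)"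
    proof cases
      case 2
      then have "G t ^ n \<le> (1 - a*t)^n" using upper G0 by (intro power_mono) auto
      then show ?thesis using 2 \<eta> by (auto simp: indicator_def intro!: add_increasing2 ennreal_leI)
    next
      case 3
      then have "G t ^ n \<le> G \<eta> ^ (n - N) * G t powr p"
        unfolding N_def using G0 G1 antimonoD[OF anti, of \<eta> t] assms n
        by (intro power_le_power_mult_powr) auto
      then have "ennreal (G t ^ n) \<le> ennreal (G \<eta> ^ (n - N)) * ennreal (G t powr p)"
        using G0[of \<eta>] by (simp add: ennreal_leI flip: ennreal_mult')
      then show ?thesis using 3 \<open>0 \<le> \<eta>\<close> by (simp add: indicator_def add_increasing)
    qed simp
  qed
  also have "\<dots> = ennreal (1 / (a * (real n + 1))) + ennreal (G \<eta> ^ (n - N)) * ennreal C"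
    using \<open>0 < a\<close>
    by (subst nn_integral_add)
       (auto simp: nn_integral_cmult nn_integral_one_minus_linear_power nn_integral_C)
  also have "\<dots> = ennreal (1 / (a * (real n + 1)) + G \<eta> ^ (n - N) * C)"
    using \<open>0 < a\<close> C G0 by (simp add: ennreal_mult ennreal_plus)
  finally have "(\<integral>\<^sup>+t. indicator {0..} t * ennreal (G t ^ n) \<partial>lborel)
      \<le> ennreal (1 / (a * (real n + 1)) + G \<eta> ^ (n - N) * C)" .
  moreover have "0 \<le> 1 / (a * (real n + 1)) + G \<eta> ^ (n - N) * C"
    using \<open>0 < a\<close> C G0 by simp
  ultimately show ?thesis
    unfolding power_integral_def N_def C_def using enn2real_mono by fastforce
qed

lemma LIMSEQ_linear_mult_power_diff_0:
  fixes q :: real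
  assumes "0 \<le> q" "q < 1"
  shows "(\<lambda>n. (real n + 1) * q ^ (n - N)) \<longlonglongrightarrow> 0"
proof (rule LIMSEQ_offset[where k = N])
  have "(\<lambda>n. real n * q ^ n + (real N + 1) * q ^ n) \<longlonglongrightarrow> 0 + (real N + 1) * 0"
    using assms by (intro tendsto_intros powser_times_n_limit_0 LIMSEQ_power_zero) auto
  then show "(\<lambda>n. (real (n + N) + 1) * q ^ (n + N - N)) \<longlonglongrightarrow> 0"
    by (simp add: algebra_simps)
qed

lemma tendsto_power_integral:
  fixes G :: "real \<Rightarrow> real"
  assumes G0: "\<And>t. 0 \<le> G t" and G1: "\<And>t. G t \<le> 1" and anti: "antimono G"
    and p: "0 < p" and Lp: "(\<lambda>t. G t powr p) integrable_on {0..}"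
    and "0 < c" and linear_at_0: "\<And>\<epsilon>. 0 < \<epsilon> \<Longrightarrow> \<exists>\<eta>>0. \<forall>t\<in>{0..\<eta>}. \<bar>G t - (1 - c*t)\<bar> \<le> \<epsilon> * t"
  shows "(\<lambda>n. (real n + 1) * power_integral G n) \<longlonglongrightarrow> 1 / c"
proof (rule order_tendstoI)
  fix y assume "y < 1 / c"
  obtain b where b: "c < b" "y < 1 / b"
  proof (cases "y \<le> 0")
    case True
    then show thesis using that[of "c + 1"] \<open>0 < c\<close> by (simp add: order.strict_trans1)
  next
    case False
    with \<open>y < 1 / c\<close> \<open>0 < c\<close> have "c < 1 / y" by (simp add: field_simps)
    then obtain b where "c < b" "b < 1 / y" using dense by blast
    with False \<open>0 < c\<close> show thesis using that[of b] by (simp add: field_simps)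
  qed
  have "0 < b" using b \<open>0 < c\<close> by simp
  obtain \<eta>0 where "0 < \<eta>0" and \<eta>0: "\<forall>t\<in>{0..\<eta>0}. \<bar>G t - (1 - c*t)\<bar> \<le> (b - c) * t"
    using linear_at_0[of "b - c"] b by auto
  define \<eta> where "\<eta> = min \<eta>0 (1 / b)"
  have \<eta>: "0 < \<eta>" "b * \<eta> \<le> 1" "\<eta> \<le> \<eta>0"
    using \<open>0 < \<eta>0\<close> b \<open>0 < c\<close> by (auto simp: \<eta>_def min_def field_simps)
  have lower: "1 - b * t \<le> G t" if "t \<in> {0..\<eta>}" for t
    using \<eta>0[rule_format, of t] that \<eta> by (auto simp: abs_le_iff algebra_simps)
  define r where "r = 1 - b * \<eta>"
  have r: "0 \<le> r" "r < 1" using \<eta> b \<open>0 < c\<close> by (auto simp: r_def)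
  have "(\<lambda>n. (1 - r * r ^ n) / b) \<longlonglongrightarrow> (1 - r * 0) / b"
    using r \<open>0 < b\<close> by (intro tendsto_intros LIMSEQ_power_zero) auto
  then have "eventually (\<lambda>n. y < (1 - r * r ^ n) / b) sequentially"
    using b by (intro order_tendstoD(1)) auto
  then show "eventually (\<lambda>n. y < (real n + 1) * power_integral G n) sequentially"
    using eventually_ge_at_top[of "nat \<lceil>p\<rceil>"]
  proof eventually_elim
    case (elim n)
    have "(1 - r ^ (n + 1)) / b = (real n + 1) * ((1 - r ^ (n + 1)) / (b * (real n + 1)))"
      using \<open>0 < b\<close> by simp
    also have "\<dots> \<le> (real n + 1) * power_integral G n"
      unfolding r_def using \<eta> \<open>0 < b\<close> lower elim(2)
      by (intro mult_left_mono power_integral_ge nn_integral_power_finite[OF G0 G1 p Lp]) auto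
    finally show ?case using elim(1) by simp
  qed
next
  fix y assume "1 / c < y"
  moreover have "0 < 1 / c" using \<open>0 < c\<close> by simp
  ultimately have "0 < y" by linarith
  with \<open>1 / c < y\<close> \<open>0 < c\<close> have "1 / y < c" "0 < 1 / y" by (auto simp: field_simps)
  then obtain a where "1 / y < a" "a < c" using dense by blast
  moreover from this have "0 < a" using \<open>0 < 1 / y\<close> by linarith
  ultimately have a: "0 < a" "a < c" "1 / a < y" using \<open>0 < y\<close> by (auto simp: field_simps)
  obtain \<eta> where "0 < \<eta>" and \<eta>: "\<forall>t\<in>{0..\<eta>}. \<bar>G t - (1 - c*t)\<bar> \<le> (c - a) * t"
    using linear_at_0[of "c - a"] a by auto
  define C where "C = integral {0..} (\<lambda>t. G t powr p)"
  have upper: "G t \<le> 1 - a * t" if "t \<in> {0..\<eta>}" for t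
    using \<eta>[rule_format, of t] that by (auto simp: abs_le_iff algebra_simps)
  have "0 < a * \<eta>" using a \<open>0 < \<eta>\<close> by simp
  then have q: "0 \<le> G \<eta>" "G \<eta> < 1"
    using G0 upper[of \<eta>] \<open>0 < \<eta>\<close> by auto
  have "(\<lambda>n. 1 / a + (real n + 1) * G \<eta> ^ (n - nat \<lceil>p\<rceil>) * C) \<longlonglongrightarrow> 1 / a + 0 * C"
    using q by (intro tendsto_intros LIMSEQ_linear_mult_power_diff_0)
  then have "eventually (\<lambda>n. 1 / a + (real n + 1) * G \<eta> ^ (n - nat \<lceil>p\<rceil>) * C < y) sequentially"
    using a by (intro order_tendstoD(2)) auto
  then show "eventually (\<lambda>n. (real n + 1) * power_integral G n < y) sequentially"
    using eventually_ge_at_top[of "nat \<lceil>p\<rceil>"]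
  proof eventually_elim
    case (elim n)
    have "power_integral G n \<le> 1 / (a * (real n + 1)) + G \<eta> ^ (n - nat \<lceil>p\<rceil>) * C"
      unfolding C_def using \<open>0 < \<eta>\<close> a upper elim(2)
      by (intro power_integral_le[OF G0 G1 anti p Lp]) auto
    then have "(real n + 1) * power_integral G n
        \<le> (real n + 1) * (1 / (a * (real n + 1)) + G \<eta> ^ (n - nat \<lceil>p\<rceil>) * C)"
      by (rule mult_left_mono) simp
    also have "\<dots> = 1 / a + (real n + 1) * G \<eta> ^ (n - nat \<lceil>p\<rceil>) * C"
    proof -
      have "(real n + 1) * (1 / (a * (real n + 1))) = 1 / a" using a by simp
      then show ?thesis by (metis distrib_left mult.assoc)
    qed
    finally show ?case using elim(1) by simp
  qed
qed

lemma power_integral_asymp_equiv: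
  fixes G :: "real \<Rightarrow> real"
  assumes "\<And>t. 0 \<le> G t" "\<And>t. G t \<le> 1" "antimono G"
    and "0 < p" "(\<lambda>t. G t powr p) integrable_on {0..}"
    and "0 < c" "\<And>\<epsilon>. 0 < \<epsilon> \<Longrightarrow> \<exists>\<eta>>0. \<forall>t\<in>{0..\<eta>}. \<bar>G t - (1 - c*t)\<bar> \<le> \<epsilon> * t"
  shows "power_integral G \<sim>[at_top] (\<lambda>n. 1 / (c * (real n + 1)))"
proof (rule asymp_equivI')
  have "(\<lambda>n. c * ((real n + 1) * power_integral G n)) \<longlonglongrightarrow> c * (1 / c)"
    by (intro tendsto_mult_left tendsto_power_integral) fact+
  then show "(\<lambda>n. power_integral G n / (1 / (c * (real n + 1)))) \<longlonglongrightarrow> 1"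
    using \<open>0 < c\<close> by (simp add: mult_ac)
qed

lemma integral_linear_approx_at_0:
  fixes f F :: "real \<Rightarrow> real"
  assumes "0 < \<delta>" and cont: "continuous_on {0..<\<delta>} f"
    and F: "\<And>t. t \<in> {0..<\<delta>} \<Longrightarrow> F t = integral {0..t} f" and "0 < \<epsilon>"
  shows "\<exists>\<eta>>0. \<forall>t\<in>{0..\<eta>}. \<bar>F t - f 0 * t\<bar> \<le> \<epsilon> * t"
proof -
  obtain r where "0 < r" and r: "\<And>s. s \<in> {0..<\<delta>} \<Longrightarrow> dist s 0 < r \<Longrightarrow> dist (f s) (f 0) < \<epsilon>"
    using cont \<open>0 < \<epsilon>\<close> \<open>0 < \<delta>\<close> unfolding continuous_on_iff by (metis atLeastLessThan_iff order_refl)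
  define \<eta> where "\<eta> = min (r / 2) (\<delta> / 2)"
  have \<eta>: "0 < \<eta>" "\<eta> < \<delta>" "\<eta> < r" using \<open>0 < r\<close> \<open>0 < \<delta>\<close> by (auto simp: \<eta>_def)
  have "\<bar>F t - f 0 * t\<bar> \<le> \<epsilon> * t" if t: "t \<in> {0..\<eta>}" for t
  proof -
    have sub: "{0..t} \<subseteq> {0..<\<delta>}" using t \<eta> by auto
    then have cont_t: "continuous_on {0..t} f" by (rule continuous_on_subset[OF cont])
    have "F t - f 0 * t = integral {0..t} (\<lambda>s. f s - f 0)"
      using t \<eta> cont_t by (simp add: F integral_diff integrable_continuous_interval)
    also have "norm \<dots> \<le> \<epsilon> * (t - 0)"
    proof (rule integral_bound)
      show "continuous_on {0..t} (\<lambda>s. f s - f 0)" by (intro continuous_intros cont_t)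
      show "norm (f s - f 0) \<le> \<epsilon>" if "s \<in> {0..t}" for s
        using r[of s] that sub t \<eta> by (force simp: dist_real_def)
    qed (use t in auto)
    finally show ?thesis by simp
  qed
  with \<eta> show ?thesis by blast
qed

lemma nonneg_at_0_if_integral_nonneg:
  fixes f F :: "real \<Rightarrow> real"
  assumes "0 < \<delta>" and cont: "continuous_on {0..<\<delta>} f"
    and F: "\<And>t. t \<in> {0..<\<delta>} \<Longrightarrow> F t = integral {0..t} f" and nonneg: "\<And>t. 0 \<le> F t"
  shows "0 \<le> f 0"
proof (rule ccontr)
  assume "\<not> 0 \<le> f 0"
  then obtain \<eta> where "0 < \<eta>" and approx: "\<forall>t\<in>{0..\<eta>}. \<bar>F t - f 0 * t\<bar> \<le> - f 0 / 2 * t"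
    using integral_linear_approx_at_0[OF \<open>0 < \<delta>\<close> cont F, of "- f 0 / 2"] by auto
  have "F \<eta> \<le> f 0 / 2 * \<eta>" using approx[rule_format, of \<eta>] \<open>0 < \<eta>\<close> by (auto simp: abs_le_iff)
  also have "\<dots> < 0" using \<open>\<not> 0 \<le> f 0\<close> \<open>0 < \<eta>\<close> by (simp add: mult_neg_pos)
  finally show False using nonneg[of \<eta>] by simp
qed

theorem theorem3:
  fixes M :: "'a measure" and X :: "nat \<Rightarrow> 'a \<Rightarrow> real"
    and F f :: "real \<Rightarrow> real"
  assumes "prob_space M"
    and meas: "\<And>i. X i \<in> borel_measurable M"
    and indep: "prob_space.indep_vars M (\<lambda>_. borel) X UNIV"
    and ident: "\<And>i. distr M borel (X i) = distr M borel (X 0)"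
    and nonneg: "\<And>i x. x \<in> space M \<Longrightarrow> X i x \<ge> 0"
    and F_def: "F = cdf (distr M borel (X 0))"
    and dens: "\<exists>\<delta>>0. continuous_on {0..<\<delta>} f \<and> (\<forall>t\<in>{0..<\<delta>}. f t \<noteq> 0)
                  \<and> (\<forall>t\<in>{0..<\<delta>}. F t = integral {0..t} f)"
    and Lp: "\<exists>p>0. (\<lambda>t. (1 - F t) powr p) integrable_on {0..}"
  shows "(\<lambda>n. prob_space.expectation M (\<lambda>x. Min ((\<lambda>i. X i x) ` {1..n})))
           \<sim>[at_top] (\<lambda>n. 1 / (f 0 * (real n + 1)))"
proof -
  interpret prob_space M by fact
  interpret D: real_distribution "distr M borel (X 0)"
    by (rule real_distribution_distr) (simp add: meas)
  obtain \<delta> where "0 < \<delta>" and cont: "continuous_on {0..<\<delta>} f" and "f 0 \<noteq> 0"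
    and F_integral: "\<And>t. t \<in> {0..<\<delta>} \<Longrightarrow> F t = integral {0..t} f"
    using dens by auto
  obtain p where "0 < p" and integrable: "(\<lambda>t. (1 - F t) powr p) integrable_on {0..}"
    using Lp by auto
  have "0 \<le> f 0"
    using nonneg_at_0_if_integral_nonneg[OF \<open>0 < \<delta>\<close> cont F_integral] by (simp add: F_def D.cdf_nonneg)
  have "power_integral (\<lambda>t. 1 - F t) \<sim>[at_top] (\<lambda>n. 1 / (f 0 * (real n + 1)))"
  proof (rule power_integral_asymp_equiv)
    show "\<exists>\<eta>>0. \<forall>t\<in>{0..\<eta>}. \<bar>1 - F t - (1 - f 0 * t)\<bar> \<le> \<epsilon> * t" if "0 < \<epsilon>" for \<epsilon>
      using integral_linear_approx_at_0[OF \<open>0 < \<delta>\<close> cont F_integral that]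
      by (simp add: abs_minus_commute)
  qed (use \<open>0 < p\<close> integrable \<open>0 \<le> f 0\<close> \<open>f 0 \<noteq> 0\<close> in
        \<open>auto simp: F_def antimono_def D.cdf_nonneg D.cdf_nondecreasing D.cdf_bounded_prob\<close>)
  moreover have "eventually (\<lambda>n. power_integral (\<lambda>t. 1 - F t) n =
      expectation (\<lambda>x. Min ((\<lambda>i. X i x) ` {1..n}))) at_top"
    using eventually_ge_at_top[of 1]
  proof eventually_elim
    case (elim n)
    then show ?case
      using expectation_Min_iid[OF indep_vars_subset[OF indep], of "{1..n}" "distr M borel (X 0)"] ident nonneg
      by (simp add: F_def)
  qed
  ultimately show ?thesis
    by (rule asymp_equiv_transfer) simp
qed

end
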